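(* Let $X$ be a Banach space and let $R:\Omega\to L(X)$ be a pseudo-resolvent which satisfies condition $\mathbf{(G_{k_0})}$ for some integer $k_0\ge1$. Then $$\ker R(\mu)^{k+1}=\ker R(\mu)^{k_0}\quad\text{and}\quad\overline{{\rm ran}\,R(\mu)^{k+1}}=\overline{{\rm ran}\,R(\mu)^{k_0}}$$ for all $\mu\in\Omega$ and all $k\ge k_0$.
   Context: Let $\Omega\subset\mathbb{C}$ be open. A map $R:\Omega\to L(X)$ is a pseudo-resolvent if $\frac{R(\lambda)-R(\mu)}{\mu-\lambda}=R(\lambda)R(\mu)$ for all $\lambda,\mu\in\Omega$ with $\lambda\neq\mu$. Condition $\mathbf{(G_k)}$ (for an integer $k\ge1$): there exist $M>0$ and a sequence $(\lambda_n)_{n\ge1}$ in $\Omega\cap\mathbb{R}$ with $\lambda_n\to\infty$ and $\|\lambda_n^{2-k}R(\lambda_n)\|\le M$ for all $n\ge1$. *)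

theory Defs
  imports "HOL-Analysis.Analysis"
begin

text \<open>Complex Banach spaces: a real Banach space with a compatible complex scalar
multiplication (the distribution has no complex vector space class).\<close>

class complex_banach = banach +
  fixes scaleC :: "complex \<Rightarrow> 'a \<Rightarrow> 'a"  (infixr "*\<^sub>C" 75)
  assumes scaleC_add_right: "a *\<^sub>C (x + y) = a *\<^sub>C x + a *\<^sub>C y"
    and scaleC_add_left: "(a + b) *\<^sub>C x = a *\<^sub>C x + b *\<^sub>C x"
    and scaleC_scaleC: "a *\<^sub>C (b *\<^sub>C x) = (a * b) *\<^sub>C x"
    and scaleC_one: "1 *\<^sub>C x = x"
    and scaleC_of_real: "complex_of_real r *\<^sub>C x = r *\<^sub>R x"
    and norm_scaleC: "norm (a *\<^sub>C x) = cmod a * norm x"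

definition bounded_clinear :: "('a::complex_banach \<Rightarrow> 'a) \<Rightarrow> bool" where
  "bounded_clinear T \<longleftrightarrow> bounded_linear T \<and> (\<forall>c x. T (c *\<^sub>C x) = c *\<^sub>C T x)"

definition pseudo_resolvent :: "complex set \<Rightarrow> (complex \<Rightarrow> 'a::complex_banach \<Rightarrow> 'a) \<Rightarrow> bool" where
  "pseudo_resolvent \<Omega> R \<longleftrightarrow> open \<Omega> \<and> (\<forall>z\<in>\<Omega>. bounded_clinear (R z)) \<and>
     (\<forall>z\<in>\<Omega>. \<forall>\<mu>\<in>\<Omega>. z \<noteq> \<mu> \<longrightarrow>
        (\<forall>x. inverse (\<mu> - z) *\<^sub>C (R z x - R \<mu> x) = R z (R \<mu> x)))"

definition cond_G :: "nat \<Rightarrow> complex set \<Rightarrow> (complex \<Rightarrow> 'a::complex_banach \<Rightarrow> 'a) \<Rightarrow> bool" where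
  "cond_G k \<Omega> R \<longleftrightarrow> (\<exists>M>0. \<exists>l :: nat \<Rightarrow> real.
     (\<forall>n\<ge>1. complex_of_real (l n) \<in> \<Omega>) \<and> filterlim l at_top sequentially \<and>
     (\<forall>n\<ge>1. onorm (\<lambda>x. (complex_of_real (l n) powi (2 - int k)) *\<^sub>C R (complex_of_real (l n)) x) \<le> M))"

end

theory Submission
  imports Defs
begin

(* Write N = R \<mu> and d = \<mu> - \<lambda>, where \<lambda> runs through the real sequence of (G_k0).
   The resolvent identity N^m R \<lambda> = N^(m+1) + d N^(m+1) R \<lambda> trades a factor 1/d for a power of N:
   starting from d^(1-k0) R \<lambda> \<rightarrow> 0, which follows from the growth bound (G_k0), k0 - 1 steps give
   N^(k0-1) R \<lambda> \<rightarrow> 0 strongly. This says N^k0 x = lim N^(k0+1) S\<^sub>\<lambda> x with S\<^sub>\<lambda> = -d (I + d R \<lambda>),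
   an operator commuting with N, and such an approximate factorisation makes the kernels and the
   closures of the ranges of N^k stationary from k = k0 on. *)

lemma scaleC_zero_left [simp]: "0 *\<^sub>C x = (0::'a::complex_banach)"
  by (metis add_cancel_right_right add_0 scaleC_add_left)

lemma scaleC_zero_right [simp]: "a *\<^sub>C (0::'a::complex_banach) = 0"
  by (metis add_cancel_right_right add_0 scaleC_add_right)

lemma scaleC_minus_left: "(- a) *\<^sub>C x = - (a *\<^sub>C x :: 'a::complex_banach)"
  by (metis add.right_inverse add_eq_0_iff scaleC_add_left scaleC_zero_left)

lemma scaleC_minus_right: "a *\<^sub>C (- x) = - (a *\<^sub>C x :: 'a::complex_banach)"
  by (metis add.right_inverse add_eq_0_iff scaleC_add_right scaleC_zero_right)

lemma scaleC_diff_right: "a *\<^sub>C (x - y) = a *\<^sub>C x - a *\<^sub>C (y::'a::complex_banach)"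
  by (metis diff_add_cancel eq_diff_eq scaleC_add_right)

lemma tendsto_scaleC_zero_bounded:
  fixes v :: "'b \<Rightarrow> 'a::complex_banach"
  assumes "(c \<longlongrightarrow> 0) F" and "\<forall>\<^sub>F n in F. norm (v n) \<le> B"
  shows "((\<lambda>n. c n *\<^sub>C v n) \<longlongrightarrow> 0) F"
proof (rule Lim_null_comparison)
  show "\<forall>\<^sub>F n in F. norm (c n *\<^sub>C v n) \<le> cmod (c n) * B"
    using assms(2) by eventually_elim (simp add: norm_scaleC mult_left_mono)
  show "((\<lambda>n. cmod (c n) * B) \<longlongrightarrow> 0) F"
    using tendsto_mult[OF tendsto_norm[OF assms(1)] tendsto_const[of B]] by simp
qed

lemma bounded_linear_scaleC_right: "bounded_linear (\<lambda>x::'a::complex_banach. c *\<^sub>C x)"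
proof
  fix x y :: 'a and r :: real
  show "c *\<^sub>C (x + y) = c *\<^sub>C x + c *\<^sub>C y" by (rule scaleC_add_right)
  show "c *\<^sub>C (r *\<^sub>R x) = r *\<^sub>R (c *\<^sub>C x)"
    by (metis mult.commute scaleC_of_real scaleC_scaleC)
  show "\<exists>K. \<forall>x::'a. norm (c *\<^sub>C x) \<le> norm x * K"
    by (rule exI[of _ "cmod c"]) (simp add: norm_scaleC mult.commute)
qed

lemma bounded_clinear_add: "bounded_clinear T \<Longrightarrow> T (x + y) = T x + T y"
  unfolding bounded_clinear_def by (simp add: linear_add bounded_linear.linear)

lemma bounded_clinear_scaleC: "bounded_clinear T \<Longrightarrow> T (c *\<^sub>C x) = c *\<^sub>C T x"
  unfolding bounded_clinear_def by simp

lemma bounded_linear_funpow: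
  fixes f :: "'a::real_normed_vector \<Rightarrow> 'a"
  shows "bounded_linear f \<Longrightarrow> bounded_linear (f ^^ n)"
proof (induction n)
  case 0
  show ?case by (simp add: id_def)
next
  case (Suc n)
  then show ?case by (simp add: comp_def bounded_linear_compose)
qed

lemma bounded_clinear_funpow:
  assumes "bounded_clinear T"
  shows "bounded_clinear (T ^^ n)"
proof -
  have "(T ^^ n) (c *\<^sub>C x) = c *\<^sub>C (T ^^ n) x" for c x
    using assms unfolding bounded_clinear_def by (induction n) simp_all
  then show ?thesis
    using assms bounded_linear_funpow unfolding bounded_clinear_def by blast
qed

lemma funpow_commute: "(\<And>x. f (g x) = g (f x)) \<Longrightarrow> (f ^^ n) (g x) = g ((f ^^ n) x)"
  by (induction n) simp_all

lemma tendsto_funpow_approximation_mono: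
  fixes N :: "'a::real_normed_vector \<Rightarrow> 'a"
  assumes N: "bounded_linear N"
    and approx: "((\<lambda>n. (N ^^ Suc k) (S n x)) \<longlongrightarrow> (N ^^ k) x) F" and "k \<le> i"
  shows "((\<lambda>n. (N ^^ Suc i) (S n x)) \<longlongrightarrow> (N ^^ i) x) F"
proof -
  obtain j where i: "i = j + k"
    using \<open>k \<le> i\<close> le_Suc_ex by (metis add.commute)
  have "((\<lambda>n. (N ^^ j) ((N ^^ Suc k) (S n x))) \<longlongrightarrow> (N ^^ j) ((N ^^ k) x)) F"
    using bounded_linear.tendsto[OF bounded_linear_funpow[OF N] approx] .
  then show ?thesis
    unfolding i add_Suc_right[symmetric] funpow_add comp_def .
qed

lemma funpow_kernel_stationary:
  fixes N :: "'a::real_normed_vector \<Rightarrow> 'a"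
  assumes F: "F \<noteq> bot" and N: "bounded_linear N"
    and commute: "\<forall>\<^sub>F n in F. S n 0 = 0 \<and> (\<forall>x. N (S n x) = S n (N x))"
    and approx: "\<And>x. ((\<lambda>n. (N ^^ Suc k) (S n x)) \<longlongrightarrow> (N ^^ k) x) F"
    and "k \<le> i"
  shows "{x. (N ^^ i) x = 0} = {x. (N ^^ k) x = 0}"
  using \<open>k \<le> i\<close>
proof (induction i rule: dec_induct)
  case (step i)
  have "(N ^^ i) x = 0" if "(N ^^ Suc i) x = 0" for x
  proof -
    have "\<forall>\<^sub>F n in F. (N ^^ Suc i) (S n x) = 0"
      using commute by eventually_elim (simp add: funpow_commute that del: funpow.simps)
    then have "((\<lambda>n. (N ^^ Suc i) (S n x)) \<longlongrightarrow> 0) F"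
      by (simp add: tendsto_eventually)
    with tendsto_funpow_approximation_mono[where S = S, OF N approx step(1)] show ?thesis
      using F tendsto_unique by blast
  qed
  moreover have "(N ^^ Suc i) x = 0" if "(N ^^ i) x = 0" for x
    using that linear_0[OF bounded_linear.linear[OF N]] by simp
  ultimately show ?case
    using step.IH by blast
qed simp

lemma funpow_closure_range_stationary:
  fixes N :: "'a::real_normed_vector \<Rightarrow> 'a"
  assumes F: "F \<noteq> bot" and N: "bounded_linear N"
    and approx: "\<And>x. ((\<lambda>n. (N ^^ Suc k) (S n x)) \<longlongrightarrow> (N ^^ k) x) F"
    and "k \<le> i"
  shows "closure (range (N ^^ i)) = closure (range (N ^^ k))"
  using \<open>k \<le> i\<close>
proof (induction i rule: dec_induct)
  case (step i)
  have "range (N ^^ i) \<subseteq> closure (range (N ^^ Suc i))"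
  proof clarify
    fix x
    have "\<forall>\<^sub>F n in F. (N ^^ Suc i) (S n x) \<in> closure (range (N ^^ Suc i))"
      by (intro always_eventually allI closure_subset[THEN subsetD] rangeI)
    from Lim_in_closed_set[OF closed_closure this F]
    show "(N ^^ i) x \<in> closure (range (N ^^ Suc i))"
      using tendsto_funpow_approximation_mono[where S = S, OF N approx step(1)] .
  qed
  moreover have "range (N ^^ Suc i) \<subseteq> range (N ^^ i)"
    by (auto simp: funpow_swap1)
  ultimately have "closure (range (N ^^ Suc i)) = closure (range (N ^^ i))"
    by (meson closure_minimal closure_mono closed_closure subset_antisym)
  with step.IH show ?case
    by simp
qed simp

lemma pseudo_resolvent_bounded_clinear:
  "pseudo_resolvent \<Omega> R \<Longrightarrow> z \<in> \<Omega> \<Longrightarrow> bounded_clinear (R z)"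
  unfolding pseudo_resolvent_def by blast

lemma pseudo_resolvent_commute:
  assumes "pseudo_resolvent \<Omega> R" "z \<in> \<Omega>" "w \<in> \<Omega>"
  shows "R z (R w x) = R w (R z x)"
proof (cases "z = w")
  case False
  have "R w (R z x) = inverse (z - w) *\<^sub>C (R w x - R z x)"
    using assms False unfolding pseudo_resolvent_def by metis
  also have "\<dots> = inverse (w - z) *\<^sub>C (R z x - R w x)"
    by (metis inverse_minus_eq minus_diff_eq scaleC_minus_left scaleC_minus_right)
  also have "\<dots> = R z (R w x)"
    using assms False unfolding pseudo_resolvent_def by metis
  finally show ?thesis by simp
qed simp

lemma pseudo_resolvent_expand:
  assumes "pseudo_resolvent \<Omega> R" "z \<in> \<Omega>" "w \<in> \<Omega>" "z \<noteq> w"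
  shows "R z x = R w x + (w - z) *\<^sub>C R w (R z x)"
proof -
  have "(w - z) *\<^sub>C R w (R z x) = (w - z) *\<^sub>C (inverse (w - z) *\<^sub>C (R z x - R w x))"
    using pseudo_resolvent_commute[OF assms(1-3)] assms unfolding pseudo_resolvent_def by metis
  also have "\<dots> = R z x - R w x"
    using assms(4) by (simp add: scaleC_scaleC scaleC_one)
  finally show ?thesis by simp
qed

lemma pseudo_resolvent_funpow_expand:
  assumes "pseudo_resolvent \<Omega> R" "z \<in> \<Omega>" "w \<in> \<Omega>" "z \<noteq> w"
  shows "(R w ^^ m) (R z x) = (R w ^^ Suc m) x + (w - z) *\<^sub>C (R w ^^ Suc m) (R z x)"
proof -
  have T: "bounded_clinear (R w ^^ m)"
    using assms by (simp add: bounded_clinear_funpow pseudo_resolvent_bounded_clinear)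
  have "(R w ^^ m) (R z x) = (R w ^^ m) (R w x + (w - z) *\<^sub>C R w (R z x))"
    using pseudo_resolvent_expand[OF assms] by metis
  also have "\<dots> = (R w ^^ m) (R w x) + (w - z) *\<^sub>C (R w ^^ m) (R w (R z x))"
    using T by (simp add: bounded_clinear_add bounded_clinear_scaleC)
  finally show ?thesis by (simp only: funpow_Suc_right comp_def)
qed

definition resolvent_approximant ::
    "(complex \<Rightarrow> 'a::complex_banach \<Rightarrow> 'a) \<Rightarrow> complex \<Rightarrow> complex \<Rightarrow> 'a \<Rightarrow> 'a" where
  "resolvent_approximant R w z x = - (w - z) *\<^sub>C (x + (w - z) *\<^sub>C R z x)"

lemma resolvent_approximant_zero:
  "pseudo_resolvent \<Omega> R \<Longrightarrow> z \<in> \<Omega> \<Longrightarrow> resolvent_approximant R w z 0 = 0"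
  using bounded_clinear_scaleC[OF pseudo_resolvent_bounded_clinear, of \<Omega> R z 0 0]
  by (simp add: resolvent_approximant_def)

lemma resolvent_approximant_commute:
  assumes "pseudo_resolvent \<Omega> R" "z \<in> \<Omega>" "w \<in> \<Omega>"
  shows "R w (resolvent_approximant R w z x) = resolvent_approximant R w z (R w x)"
  using pseudo_resolvent_bounded_clinear[OF assms(1,3)] pseudo_resolvent_commute[OF assms(1,3,2)]
  by (simp add: resolvent_approximant_def bounded_clinear_add bounded_clinear_scaleC)

lemma funpow_resolvent_approximant:
  assumes PR: "pseudo_resolvent \<Omega> R" and "z \<in> \<Omega>" "w \<in> \<Omega>" "z \<noteq> w" and "k \<ge> 1"
  shows "(R w ^^ Suc k) (resolvent_approximant R w z x) = (R w ^^ k) x - (R w ^^ (k - 1)) (R z x)"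
proof -
  have expand: "(R w ^^ m) (R z x) = (R w ^^ Suc m) x + (w - z) *\<^sub>C (R w ^^ Suc m) (R z x)" for m
    using pseudo_resolvent_funpow_expand[OF assms(1-4)] .
  have "bounded_clinear (R w ^^ Suc k)"
    by (rule bounded_clinear_funpow[OF pseudo_resolvent_bounded_clinear[OF PR \<open>w \<in> \<Omega>\<close>]])
  then have "(R w ^^ Suc k) (resolvent_approximant R w z x)
      = - (w - z) *\<^sub>C ((R w ^^ Suc k) x + (w - z) *\<^sub>C (R w ^^ Suc k) (R z x))"
    by (simp add: resolvent_approximant_def bounded_clinear_add bounded_clinear_scaleC del: funpow.simps)
  also have "\<dots> = - (w - z) *\<^sub>C (R w ^^ k) (R z x)"
    by (simp only: expand[of k])
  also have "\<dots> = (R w ^^ k) x - (R w ^^ (k - 1)) (R z x)"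
    using expand[of "k - 1"] \<open>k \<ge> 1\<close> by (simp add: scaleC_minus_left[symmetric] del: funpow.simps)
  finally show ?thesis .
qed

lemma tendsto_funpow_descent:
  fixes N :: "'a::complex_banach \<Rightarrow> 'a" and A :: "'b \<Rightarrow> 'a \<Rightarrow> 'a" and d :: "'b \<Rightarrow> complex"
  assumes d: "filterlim d at_infinity F"
    and expand: "\<forall>\<^sub>F n in F. \<forall>m. (N ^^ m) (A n x) = (N ^^ Suc m) x + d n *\<^sub>C (N ^^ Suc m) (A n x)"
    and "((\<lambda>n. inverse (d n ^ j) *\<^sub>C (N ^^ m) (A n x)) \<longlongrightarrow> 0) F"
  shows "((\<lambda>n. (N ^^ (m + j)) (A n x)) \<longlongrightarrow> 0) F"
  using assms(3)
proof (induction j arbitrary: m)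
  case 0
  then show ?case by (simp add: scaleC_one)
next
  case (Suc j)
  have inverse_power: "((\<lambda>n. inverse (d n ^ Suc j)) \<longlongrightarrow> 0) F"
    using tendsto_power[OF filterlim_compose[OF tendsto_inverse_0 d], of "Suc j"]
    by (simp add: power_inverse)
  have "((\<lambda>n. inverse (d n ^ Suc j) *\<^sub>C (N ^^ Suc m) x) \<longlongrightarrow> 0) F"
    by (rule tendsto_scaleC_zero_bounded[OF inverse_power, where B = "norm ((N ^^ Suc m) x)"]) simp
  with Suc.prems have "((\<lambda>n. inverse (d n ^ Suc j) *\<^sub>C (N ^^ m) (A n x)
             - inverse (d n ^ Suc j) *\<^sub>C (N ^^ Suc m) x) \<longlongrightarrow> 0 - 0) F"
    by (rule tendsto_diff)
  moreover have "\<forall>\<^sub>F n in F. inverse (d n ^ Suc j) *\<^sub>C (N ^^ m) (A n x)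
             - inverse (d n ^ Suc j) *\<^sub>C (N ^^ Suc m) x
           = inverse (d n ^ j) *\<^sub>C (N ^^ Suc m) (A n x)"
    using expand filterlim_at_infinity_imp_eventually_ne[OF d, of 0]
  proof eventually_elim
    case (elim n)
    have "(N ^^ m) (A n x) - (N ^^ Suc m) x = d n *\<^sub>C (N ^^ Suc m) (A n x)"
      using elim(1) by (metis add_diff_cancel_left')
    then have "inverse (d n ^ Suc j) *\<^sub>C (N ^^ m) (A n x) - inverse (d n ^ Suc j) *\<^sub>C (N ^^ Suc m) x
        = inverse (d n ^ Suc j) *\<^sub>C (d n *\<^sub>C (N ^^ Suc m) (A n x))"
      by (simp only: scaleC_diff_right[symmetric])
    also have "\<dots> = inverse (d n ^ j) *\<^sub>C (N ^^ Suc m) (A n x)"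
      using elim(2) by (simp add: scaleC_scaleC field_simps)
    finally show ?case .
  qed
  ultimately have "((\<lambda>n. inverse (d n ^ j) *\<^sub>C (N ^^ Suc m) (A n x)) \<longlongrightarrow> 0) F"
    by (simp add: Lim_transform_eventually)
  then show ?case
    using Suc.IH by fastforce
qed

lemma tendsto_resolvent_decay:
  fixes T :: "'b \<Rightarrow> 'a \<Rightarrow> 'a::complex_banach" and lam :: "'b \<Rightarrow> complex"
  assumes lam: "filterlim lam at_infinity F" and k: "k \<ge> 1"
    and bound: "\<forall>\<^sub>F n in F. norm (lam n powi (2 - int k) *\<^sub>C T n x) \<le> B"
  shows "((\<lambda>n. inverse ((\<mu> - lam n) ^ (k - 1)) *\<^sub>C T n x) \<longlongrightarrow> 0) F"
proof -
  (* c n * lam n powi (2 - k) = (\<mu> - lam n) powi (1 - k), and c \<rightarrow> 0 since lam n / (\<mu> - lam n) \<rightarrow> -1 *)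
  define c where "c n = (lam n / (\<mu> - lam n)) ^ (k - 1) * inverse (lam n)" for n
  have lam_ne: "\<forall>\<^sub>F n in F. lam n \<noteq> 0"
    by (rule filterlim_at_infinity_imp_eventually_ne[OF lam])
  have "((\<lambda>n. inverse (\<mu> / lam n - 1)) \<longlongrightarrow> inverse (0 - 1)) F"
    by (intro tendsto_inverse tendsto_diff tendsto_divide_0[OF tendsto_const lam] tendsto_const) simp
  moreover have "\<forall>\<^sub>F n in F. inverse (\<mu> / lam n - 1) = lam n / (\<mu> - lam n)"
    using lam_ne by eventually_elim (simp add: field_simps)
  ultimately have "((\<lambda>n. lam n / (\<mu> - lam n)) \<longlongrightarrow> -1) F"
    by (simp add: Lim_transform_eventually)
  then have "(c \<longlongrightarrow> (-1) ^ (k - 1) * 0) F"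
    unfolding c_def by (intro tendsto_mult tendsto_power filterlim_compose[OF tendsto_inverse_0 lam])
  then have "((\<lambda>n. c n *\<^sub>C (lam n powi (2 - int k) *\<^sub>C T n x)) \<longlongrightarrow> 0) F"
    using bound by (intro tendsto_scaleC_zero_bounded) simp_all
  moreover have "\<forall>\<^sub>F n in F. c n *\<^sub>C (lam n powi (2 - int k) *\<^sub>C T n x)
      = inverse ((\<mu> - lam n) ^ (k - 1)) *\<^sub>C T n x"
    using lam_ne
  proof eventually_elim
    case (elim n)
    have "lam n powi (2 - int k) = lam n / lam n ^ (k - 1)"
      using k elim by (cases k) (simp_all add: power_int_diff power2_eq_square field_simps)
    then show ?case
      using elim by (simp add: scaleC_scaleC c_def field_simps)
  qed
  ultimately show ?thesis
    by (simp add: Lim_transform_eventually)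
qed

lemma cond_G_sequence:
  fixes R :: "complex \<Rightarrow> 'a::complex_banach \<Rightarrow> 'a"
  assumes PR: "pseudo_resolvent \<Omega> R" and G: "cond_G k \<Omega> R"
  obtains M and lam :: "nat \<Rightarrow> complex"
  where "filterlim lam at_infinity sequentially" and "\<forall>\<^sub>F n in sequentially. lam n \<in> \<Omega>"
    and "\<And>x. \<forall>\<^sub>F n in sequentially. norm (lam n powi (2 - int k) *\<^sub>C R (lam n) x) \<le> M * norm x"
proof -
  obtain M l where l_in: "\<forall>n\<ge>1. complex_of_real (l n) \<in> \<Omega>"
    and l_lim: "filterlim l at_top sequentially"
    and l_bound: "\<forall>n\<ge>1. onorm (\<lambda>x. complex_of_real (l n) powi (2 - int k) *\<^sub>C
                                  R (complex_of_real (l n)) x) \<le> M"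
    using G unfolding cond_G_def by blast
  show ?thesis
  proof (rule that)
    show "filterlim (\<lambda>n. complex_of_real (l n)) at_infinity sequentially"
      by (rule filterlim_compose[OF filterlim_of_real_at_infinity l_lim])
    show "\<forall>\<^sub>F n in sequentially. complex_of_real (l n) \<in> \<Omega>"
      using l_in by (auto simp: eventually_sequentially)
    fix x
    show "\<forall>\<^sub>F n in sequentially.
        norm (complex_of_real (l n) powi (2 - int k) *\<^sub>C R (complex_of_real (l n)) x) \<le> M * norm x"
      using eventually_ge_at_top[of 1]
    proof eventually_elim
      case (elim n)
      let ?T = "\<lambda>x. complex_of_real (l n) powi (2 - int k) *\<^sub>C R (complex_of_real (l n)) x"
      have "bounded_linear ?T"
        using bounded_linear_compose[OF bounded_linear_scaleC_right]
          pseudo_resolvent_bounded_clinear[OF PR] l_in elim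
        unfolding bounded_clinear_def by blast
      then have "norm (?T x) \<le> onorm ?T * norm x"
        by (rule onorm)
      also have "\<dots> \<le> M * norm x"
        using l_bound elim by (simp add: mult_right_mono)
      finally show ?case .
    qed
  qed
qed

lemma pseudo_resolvent_funpow_approximation:
  fixes R :: "complex \<Rightarrow> 'a::complex_banach \<Rightarrow> 'a"
  assumes PR: "pseudo_resolvent \<Omega> R" and k0: "k0 \<ge> 1" and G: "cond_G k0 \<Omega> R" and \<mu>: "\<mu> \<in> \<Omega>"
  obtains lam :: "nat \<Rightarrow> complex"
  where "\<forall>\<^sub>F n in sequentially. lam n \<in> \<Omega>"
    and "\<And>x. ((\<lambda>n. (R \<mu> ^^ Suc k0) (resolvent_approximant R \<mu> (lam n) x)) \<longlongrightarrow> (R \<mu> ^^ k0) x)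
               sequentially"
proof -
  obtain M lam where lam_inf: "filterlim lam at_infinity sequentially"
    and lam_in: "\<forall>\<^sub>F n in sequentially. lam n \<in> \<Omega>"
    and bound: "\<And>x. \<forall>\<^sub>F n in sequentially. norm (lam n powi (2 - int k0) *\<^sub>C R (lam n) x) \<le> M * norm x"
    using cond_G_sequence[OF PR G] by blast
  define d where "d n = \<mu> - lam n" for n
  have "filterlim (\<lambda>n. lam n + - \<mu>) at_infinity sequentially"
    by (rule tendsto_add_filterlim_at_infinity'[OF lam_inf tendsto_const])
  then have d_inf: "filterlim d at_infinity sequentially"
    by (simp add: filterlim_at_infinity_conv_norm_at_top d_def norm_minus_commute)
  have lam_admissible: "\<forall>\<^sub>F n in sequentially. lam n \<in> \<Omega> \<and> lam n \<noteq> \<mu>"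
    using lam_in filterlim_at_infinity_imp_eventually_ne[OF lam_inf, of \<mu>] by eventually_elim simp
  have vanish: "((\<lambda>n. (R \<mu> ^^ (k0 - 1)) (R (lam n) x)) \<longlongrightarrow> 0) sequentially" for x
  proof -
    have "\<forall>\<^sub>F n in sequentially.
        \<forall>m. (R \<mu> ^^ m) (R (lam n) x) = (R \<mu> ^^ Suc m) x + d n *\<^sub>C (R \<mu> ^^ Suc m) (R (lam n) x)"
      using lam_admissible unfolding d_def
      by eventually_elim (blast intro: pseudo_resolvent_funpow_expand[OF PR _ \<mu>])
    moreover have "((\<lambda>n. inverse (d n ^ (k0 - 1)) *\<^sub>C R (lam n) x) \<longlongrightarrow> 0) sequentially"
      unfolding d_def by (rule tendsto_resolvent_decay[OF lam_inf k0 bound])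
    ultimately show ?thesis
      using tendsto_funpow_descent[where A = "\<lambda>n. R (lam n)" and m = 0 and j = "k0 - 1", OF d_inf]
      by simp
  qed
  show ?thesis
  proof
    show "\<forall>\<^sub>F n in sequentially. lam n \<in> \<Omega>"
      by (rule lam_in)
    fix x
    have "\<forall>\<^sub>F n in sequentially. (R \<mu> ^^ k0) x - (R \<mu> ^^ (k0 - 1)) (R (lam n) x)
        = (R \<mu> ^^ Suc k0) (resolvent_approximant R \<mu> (lam n) x)"
      using lam_admissible
      by eventually_elim (simp add: funpow_resolvent_approximant[OF PR _ \<mu> _ k0] del: funpow.simps)
    moreover have "((\<lambda>n. (R \<mu> ^^ k0) x - (R \<mu> ^^ (k0 - 1)) (R (lam n) x)) \<longlongrightarrow> (R \<mu> ^^ k0) x - 0)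
        sequentially"
      by (intro tendsto_diff tendsto_const vanish)
    ultimately show "((\<lambda>n. (R \<mu> ^^ Suc k0) (resolvent_approximant R \<mu> (lam n) x)) \<longlongrightarrow> (R \<mu> ^^ k0) x)
        sequentially"
      by (simp add: Lim_transform_eventually)
  qed
qed

theorem mainTheorem4:
  fixes R :: "complex \<Rightarrow> 'a::complex_banach \<Rightarrow> 'a" and \<Omega> :: "complex set" and k0 :: nat
  assumes "pseudo_resolvent \<Omega> R" and "k0 \<ge> 1" and "cond_G k0 \<Omega> R"
  shows "\<forall>\<mu>\<in>\<Omega>. \<forall>k\<ge>k0.
           {x. (R \<mu> ^^ (k + 1)) x = 0} = {x. (R \<mu> ^^ k0) x = 0} \<and>
           closure (range (R \<mu> ^^ (k + 1))) = closure (range (R \<mu> ^^ k0))"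
proof (intro ballI allI impI)
  fix \<mu> k
  assume \<mu>: "\<mu> \<in> \<Omega>" and "k0 \<le> k"
  then have k: "k0 \<le> k + 1" by simp
  obtain lam where lam_in: "\<forall>\<^sub>F n in sequentially. lam n \<in> \<Omega>"
    and approx: "\<And>x. ((\<lambda>n. (R \<mu> ^^ Suc k0) (resolvent_approximant R \<mu> (lam n) x)) \<longlongrightarrow> (R \<mu> ^^ k0) x)
                  sequentially"
    using pseudo_resolvent_funpow_approximation[OF assms \<mu>] by blast
  have commute: "\<forall>\<^sub>F n in sequentially. resolvent_approximant R \<mu> (lam n) 0 = 0 \<and>
      (\<forall>x. R \<mu> (resolvent_approximant R \<mu> (lam n) x) = resolvent_approximant R \<mu> (lam n) (R \<mu> x))"
    using lam_in by eventually_elim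
      (simp add: resolvent_approximant_zero[OF assms(1)] resolvent_approximant_commute[OF assms(1) _ \<mu>])
  have N: "bounded_linear (R \<mu>)"
    using pseudo_resolvent_bounded_clinear[OF assms(1) \<mu>] by (simp add: bounded_clinear_def)
  show "{x. (R \<mu> ^^ (k + 1)) x = 0} = {x. (R \<mu> ^^ k0) x = 0} \<and>
      closure (range (R \<mu> ^^ (k + 1))) = closure (range (R \<mu> ^^ k0))"
    using funpow_kernel_stationary[OF trivial_limit_sequentially N commute approx k]
      funpow_closure_range_stationary[OF trivial_limit_sequentially N approx k]
    by blast
qed

end
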